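(* For every $N\ge1$ and every $\alpha\in\mathbb{S}_m$, $w^{St}_{\mathfrak{so}(N)}(\alpha)=\sum_{s:[m]\to\{1,-1\}}\operatorname{sign}(s)\,N^{f(\alpha_s)-1}$, the sum running over all $2^m$ states $s$ of $\alpha$.
   Context: For $1\le i\le N$, $\bar i=N+1-i$, $F_{ij}=E_{ij}-E_{\bar j\bar i}$ ($E_{ij}$ matrix units), spanning $\mathfrak{so}(N)$; $w_{\mathfrak{so}(N)}(\alpha)=\sum_{i_1,\dots,i_m=1}^N F_{i_1i_{\alpha(1)}}\cdots F_{i_mi_{\alpha(m)}}\in U(\mathfrak{so}(N))$. $w^{St}_{\mathfrak{so}(N)}(\alpha)=\frac1N\operatorname{Tr}\rho(w_{\mathfrak{so}(N)}(\alpha))$, where $\rho:U(\mathfrak{so}(N))\to\mathrm{Mat}_N(\mathbb{C})$ extends the standard (matrix) representation. A state of $\alpha\in\mathbb{S}_m$ is a map $s:[m]\to\{1,-1\}$; $\operatorname{sign}(s)=(-1)^{\#s^{-1}(-1)}$. The number $f(\alpha_s)$ is defined as the number of connected components of the following graph $G$ in which every vertex has degree 2: vertices $l^-,l^+$ for $l\in[m]$; "loop" edges $l^+\!-\!(l+1)^-$ for $1\le l<m$ and $m^+\!-\!1^-$; and for each $l\in[m]$ an "arrow" edge joining the tail point of $l$ with the head point of $\alpha(l)$, where for a leg $l$ with $s(l)=1$ the head point is $l^-$ and the tail point is $l^+$, and for $s(l)=-1$ the head point is $l^+$ and the tail point is $l^-$. (This is the number of boundary components of the possibly non-orientable hypermap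 surface of $\alpha$ in which hyperedge attachments at legs of state $-1$ are half-twisted.) *)

theory Defs
  imports Complex_Main "HOL-Library.FuncSet" "HOL-Combinatorics.Permutations"
begin

text \<open>N x N matrices are functions nat => nat => real, indexed by 1..N.\<close>

definition bar :: "nat \<Rightarrow> nat \<Rightarrow> nat" where
  "bar N i = N + 1 - i"

definition matE :: "nat \<Rightarrow> nat \<Rightarrow> nat \<Rightarrow> nat \<Rightarrow> real" where
  "matE i j = (\<lambda>a b. if a = i \<and> b = j then 1 else 0)"

text \<open>Image of F_ij = E_ij - E_{bar j, bar i} under the standard representation.\<close>
definition matF :: "nat \<Rightarrow> nat \<Rightarrow> nat \<Rightarrow> nat \<Rightarrow> nat \<Rightarrow> real" where
  "matF N i j = (\<lambda>a b. matE i j a b - matE (bar N j) (bar N i) a b)"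

definition matmul :: "nat \<Rightarrow> (nat \<Rightarrow> nat \<Rightarrow> real) \<Rightarrow> (nat \<Rightarrow> nat \<Rightarrow> real) \<Rightarrow> (nat \<Rightarrow> nat \<Rightarrow> real)" where
  "matmul N A B = (\<lambda>a b. \<Sum>c = 1..N. A a c * B c b)"

definition matid :: "nat \<Rightarrow> nat \<Rightarrow> real" where
  "matid = (\<lambda>a b. if a = b then 1 else 0)"

definition matprod_list :: "nat \<Rightarrow> (nat \<Rightarrow> nat \<Rightarrow> real) list \<Rightarrow> (nat \<Rightarrow> nat \<Rightarrow> real)" where
  "matprod_list N Ms = foldr (matmul N) Ms matid"

definition mtrace :: "nat \<Rightarrow> (nat \<Rightarrow> nat \<Rightarrow> real) \<Rightarrow> real" where
  "mtrace N A = (\<Sum>a = 1..N. A a a)"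

definition rho_w_so :: "nat \<Rightarrow> nat \<Rightarrow> (nat \<Rightarrow> nat) \<Rightarrow> (nat \<Rightarrow> nat \<Rightarrow> real)" where
  "rho_w_so N m \<alpha> = (\<lambda>a b. \<Sum>i \<in> Pi\<^sub>E {1..m} (\<lambda>_. {1..N}).
       matprod_list N (map (\<lambda>l. matF N (i l) (i (\<alpha> l))) [1..<m+1]) a b)"

definition wSt_so :: "nat \<Rightarrow> nat \<Rightarrow> (nat \<Rightarrow> nat) \<Rightarrow> real" where
  "wSt_so N m \<alpha> = (1 / real N) * mtrace N (rho_w_so N m \<alpha>)"

definition states :: "nat \<Rightarrow> (nat \<Rightarrow> int) set" where
  "states m = Pi\<^sub>E {1..m} (\<lambda>_. {1, -1})"

definition state_sign :: "nat \<Rightarrow> (nat \<Rightarrow> int) \<Rightarrow> int" where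
  "state_sign m s = (-1) ^ card {l \<in> {1..m}. s l = -1}"

text \<open>Vertex (l, True) is l^+, (l, False) is l^-.\<close>
definition gverts :: "nat \<Rightarrow> (nat \<times> bool) set" where
  "gverts m = {1..m} \<times> UNIV"

definition head_pt :: "(nat \<Rightarrow> int) \<Rightarrow> nat \<Rightarrow> nat \<times> bool" where
  "head_pt s l = (if s l = 1 then (l, False) else (l, True))"

definition tail_pt :: "(nat \<Rightarrow> int) \<Rightarrow> nat \<Rightarrow> nat \<times> bool" where
  "tail_pt s l = (if s l = 1 then (l, True) else (l, False))"

definition gedges :: "nat \<Rightarrow> (nat \<Rightarrow> nat) \<Rightarrow> (nat \<Rightarrow> int) \<Rightarrow> ((nat \<times> bool) \<times> (nat \<times> bool)) set" where
  "gedges m \<alpha> s =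
     {((l, True), (l + 1, False)) | l. 1 \<le> l \<and> l < m}
     \<union> {((m, True), (1, False))}
     \<union> {(tail_pt s l, head_pt s (\<alpha> l)) | l. l \<in> {1..m}}"

definition f_state :: "nat \<Rightarrow> (nat \<Rightarrow> nat) \<Rightarrow> (nat \<Rightarrow> int) \<Rightarrow> nat" where
  "f_state m \<alpha> s = card (gverts m // ((gedges m \<alpha> s \<union> (gedges m \<alpha> s)\<inverse>)\<^sup>*))"

end

theory Submission
  imports Defs
begin

lemma sum_PiE_insert:
  assumes "j \<notin> S"
  shows "(\<Sum>c\<in>PiE (insert j S) (\<lambda>_. A). g c) = (\<Sum>d\<in>A. \<Sum>c\<in>PiE S (\<lambda>_. A). g (c(j := d)))"
  unfolding PiE_insert_eq
  by (subst sum.reindex[OF inj_combinator[OF assms]]) (simp add: sum.cartesian_product case_prod_beta)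

lemma matmul_matid_right: "b \<in> {1..N} \<Longrightarrow> matmul N M matid a b = M a b"
  by (simp add: matmul_def matid_def if_distrib[of "(*) _"] cong: if_cong)

lemma matprod_list_entry:
  assumes "j \<le> m" "b \<in> {1..N}"
  shows "matprod_list N (map M [j..<Suc m]) a b =
    (\<Sum>c\<in>PiE {Suc j..m} (\<lambda>_. {1..N}).
       \<Prod>l=j..m. M l ((c(j := a, Suc m := b)) l) ((c(j := a, Suc m := b)) (Suc l)))"
  using assms(1)
proof (induction j arbitrary: a rule: inc_induct)
  case base
  then show ?case using assms(2) by (simp add: matprod_list_def matmul_matid_right)
next
  case (step j)
  have "matprod_list N (map M [j..<Suc m]) a b
      = (\<Sum>d\<in>{1..N}. M j a d * matprod_list N (map M [Suc j..<Suc m]) d b)"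
    using step.hyps by (simp add: upt_conv_Cons matprod_list_def matmul_def del: upt_Suc)
  also have "\<dots> = (\<Sum>d\<in>{1..N}. \<Sum>c\<in>PiE {Suc (Suc j)..m} (\<lambda>_. {1..N}).
       M j a d * (\<Prod>l=Suc j..m. M l ((c(Suc j := d, Suc m := b)) l) ((c(Suc j := d, Suc m := b)) (Suc l))))"
    by (simp only: step.IH sum_distrib_left)
  also have "\<dots> = (\<Sum>c\<in>PiE {Suc j..m} (\<lambda>_. {1..N}).
       M j a (c (Suc j)) * (\<Prod>l=Suc j..m. M l ((c(Suc m := b)) l) ((c(Suc m := b)) (Suc l))))"
    using step.hyps
    by (simp add: sum_PiE_insert atLeastAtMost_insertL[symmetric, of "Suc j"])
  also have "\<dots> = (\<Sum>c\<in>PiE {Suc j..m} (\<lambda>_. {1..N}).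
       \<Prod>l=j..m. M l ((c(j := a, Suc m := b)) l) ((c(j := a, Suc m := b)) (Suc l)))"
  proof (intro sum.cong refl)
    fix c :: "nat \<Rightarrow> nat"
    have "(\<Prod>l=Suc j..m. M l ((c(j := a, Suc m := b)) l) ((c(j := a, Suc m := b)) (Suc l)))
        = (\<Prod>l=Suc j..m. M l ((c(Suc m := b)) l) ((c(Suc m := b)) (Suc l)))"
      by (intro prod.cong) auto
    then show "M j a (c (Suc j)) * (\<Prod>l=Suc j..m. M l ((c(Suc m := b)) l) ((c(Suc m := b)) (Suc l)))
        = (\<Prod>l=j..m. M l ((c(j := a, Suc m := b)) l) ((c(j := a, Suc m := b)) (Suc l)))"
      using step.hyps by (simp add: prod.atLeast_Suc_atMost)
  qed
  finally show ?case .
qed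

definition nxt :: "nat \<Rightarrow> nat \<Rightarrow> nat" where
  "nxt m l = (if l = m then 1 else Suc l)"

lemma mtrace_matprod_list:
  assumes "1 \<le> m"
  shows "mtrace N (matprod_list N (map M [1..<Suc m])) =
    (\<Sum>c\<in>PiE {1..m} (\<lambda>_. {1..N}). \<Prod>l=1..m. M l (c l) (c (nxt m l)))"
proof -
  let ?g = "\<lambda>c. \<Prod>l=1..m. M l ((c(Suc m := c 1)) l) ((c(Suc m := c 1)) (Suc l))"
  have "mtrace N (matprod_list N (map M [1..<Suc m])) =
     (\<Sum>a\<in>{1..N}. \<Sum>c\<in>PiE {Suc 1..m} (\<lambda>_. {1..N}). ?g (c(1 := a)))"
    unfolding mtrace_def using assms by (intro sum.cong refl, subst matprod_list_entry) auto
  also have "\<dots> = (\<Sum>c\<in>PiE (insert 1 {Suc 1..m}) (\<lambda>_. {1..N}). ?g c)"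
    by (rule sum_PiE_insert[symmetric]) simp
  also have "\<dots> = (\<Sum>c\<in>PiE {1..m} (\<lambda>_. {1..N}). \<Prod>l=1..m. M l (c l) (c (nxt m l)))"
    using assms by (intro sum.cong prod.cong) (auto simp: atLeastAtMost_insertL nxt_def)
  finally show ?thesis .
qed

definition leg_ends :: "nat \<Rightarrow> int \<Rightarrow> nat \<Rightarrow> nat \<Rightarrow> nat \<times> nat" where
  "leg_ends N \<sigma> i j = (if \<sigma> = 1 then (i, j) else (bar N j, bar N i))"

lemma matF_eq_signed_sum:
  "matF N i j u v = (\<Sum>\<sigma>\<in>{1, -1::int}. of_int \<sigma> * of_bool ((u, v) = leg_ends N \<sigma> i j))"
  by (simp add: matF_def matE_def leg_ends_def of_bool_def)

lemma prod_of_bool: "finite A \<Longrightarrow> (\<Prod>x\<in>A. of_bool (P x)) = (of_bool (\<forall>x\<in>A. P x) :: 'a::comm_semiring_1)"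
  by (induction A rule: finite_induct) auto
lemma prod_state_eq_state_sign:
  assumes "s \<in> states m"
  shows "(\<Prod>l=1..m. of_int (s l)) = (of_int (state_sign m s) :: real)"
proof -
  have "(\<Prod>l=1..m. of_int (s l)) = (\<Prod>l\<in>{l \<in> {1..m}. s l = -1}. -1 :: real)"
    using assms by (intro prod.mono_neutral_cong_right) (auto simp: states_def)
  then show ?thesis by (simp add: state_sign_def)
qed
definition state_walks :: "nat \<Rightarrow> nat \<Rightarrow> (nat \<Rightarrow> nat) \<Rightarrow> (nat \<Rightarrow> int) \<Rightarrow> ((nat \<Rightarrow> nat) \<times> (nat \<Rightarrow> nat)) set" where
  "state_walks N m \<alpha> s = {(i, c) \<in> PiE {1..m} (\<lambda>_. {1..N}) \<times> PiE {1..m} (\<lambda>_. {1..N}).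
     \<forall>l\<in>{1..m}. (c l, c (nxt m l)) = leg_ends N (s l) (i l) (i (\<alpha> l))}"

lemma prod_matF_eq_sum_states:
  "(\<Prod>l=1..m. matF N (i l) (i (\<alpha> l)) (c l) (c' l)) =
   (\<Sum>s\<in>states m. of_int (state_sign m s) *
      of_bool (\<forall>l\<in>{1..m}. (c l, c' l) = leg_ends N (s l) (i l) (i (\<alpha> l))))"
proof -
  have "(\<Prod>l=1..m. matF N (i l) (i (\<alpha> l)) (c l) (c' l)) =
      (\<Sum>s\<in>states m. \<Prod>l=1..m. of_int (s l) * of_bool ((c l, c' l) = leg_ends N (s l) (i l) (i (\<alpha> l))))"
    unfolding matF_eq_signed_sum states_def by (rule prod_sum_PiE) auto
  also have "\<dots> = (\<Sum>s\<in>states m. of_int (state_sign m s) *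
      of_bool (\<forall>l\<in>{1..m}. (c l, c' l) = leg_ends N (s l) (i l) (i (\<alpha> l))))"
    by (intro sum.cong refl)
       (simp only: prod.distrib prod_state_eq_state_sign prod_of_bool[OF finite_atLeastAtMost])
  finally show ?thesis .
qed

lemma mtrace_rho_w_so:
  assumes "1 \<le> m"
  shows "mtrace N (rho_w_so N m \<alpha>) =
    (\<Sum>s\<in>states m. of_int (state_sign m s) * real (card (state_walks N m \<alpha> s)))"
proof -
  let ?I = "PiE {1..m} (\<lambda>_. {1..N})"
  let ?walk = "\<lambda>i c s. \<forall>l\<in>{1..m}. (c l, c (nxt m l)) = leg_ends N (s l) (i l) (i (\<alpha> l))"
  have "mtrace N (rho_w_so N m \<alpha>) =
      (\<Sum>i\<in>?I. mtrace N (matprod_list N (map (\<lambda>l. matF N (i l) (i (\<alpha> l))) [1..<Suc m])))"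
    unfolding mtrace_def rho_w_so_def Suc_eq_plus1 by (rule sum.swap)
  also have "\<dots> = (\<Sum>i\<in>?I. \<Sum>c\<in>?I. \<Sum>s\<in>states m. of_int (state_sign m s) * of_bool (?walk i c s))"
    unfolding mtrace_matprod_list[OF assms] by (intro sum.cong refl) (rule prod_matF_eq_sum_states)
  also have "\<dots> = (\<Sum>s\<in>states m. of_int (state_sign m s) * (\<Sum>i\<in>?I. \<Sum>c\<in>?I. of_bool (?walk i c s)))"
    by (simp add: sum_distrib_left sum.swap[of _ "states m"] sum.swap[of _ ?I])
  also have "\<dots> = (\<Sum>s\<in>states m. of_int (state_sign m s) * real (card (state_walks N m \<alpha> s)))"
  proof (intro sum.cong refl arg_cong2[where f = "(*)"])
    fix s
    have "state_walks N m \<alpha> s = (?I \<times> ?I) \<inter> {p. ?walk (fst p) (snd p) s}"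
      by (auto simp: state_walks_def)
    then show "(\<Sum>i\<in>?I. \<Sum>c\<in>?I. of_bool (?walk i c s)) = real (card (state_walks N m \<alpha> s))"
      by (subst sum.cartesian_product)
         (simp only: split_def sum_of_bool_eq finite_SigmaI finite_PiE finite_atLeastAtMost)
  qed
  finally show ?thesis .
qed

definition fpf_involution_on :: "'a set \<Rightarrow> ('a \<Rightarrow> 'a) \<Rightarrow> bool" where
  "fpf_involution_on V M \<longleftrightarrow> (\<forall>v\<in>V. M v \<in> V \<and> M (M v) = v \<and> M v \<noteq> v)"

lemma fpf_involution_on_Diff_pair:
  assumes "fpf_involution_on V M" "v \<in> V"
  shows "fpf_involution_on (V - {v, M v}) M"
  using assms unfolding fpf_involution_on_def by (auto, metis+)

definition short_circuit :: "('a \<Rightarrow> 'a) \<Rightarrow> ('a \<Rightarrow> 'a) \<Rightarrow> 'a \<Rightarrow> 'a \<Rightarrow> 'a" where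
  "short_circuit M1 M2 v x = (if M2 x = v then M2 (M1 v) else if M2 x = M1 v then M2 v else M2 x)"

lemma fpf_involution_on_short_circuit:
  assumes "fpf_involution_on V M1" "fpf_involution_on V M2" "v \<in> V"
  shows "fpf_involution_on (V - {v, M1 v}) (short_circuit M1 M2 v)"
  using assms unfolding fpf_involution_on_def short_circuit_def by (auto, metis+)

lemma two_colouring_extend:
  fixes \<beta> :: "'a \<Rightarrow> bool"
  assumes fpf1: "fpf_involution_on V M1" and fpf2: "fpf_involution_on V M2" and v: "v \<in> V"
    and \<beta>: "\<forall>x\<in>V - {v, M1 v}. \<beta> (M1 x) \<noteq> \<beta> x \<and> \<beta> (short_circuit M1 M2 v x) \<noteq> \<beta> x"
  defines "\<gamma> \<equiv> \<beta>(M1 v := \<beta> (M2 v), v := \<not> \<beta> (M2 v))"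
  shows "\<forall>x\<in>V. \<gamma> (M1 x) \<noteq> \<gamma> x \<and> \<gamma> (M2 x) \<noteq> \<gamma> x"
proof -
  define u where "u = M1 v"
  have M2: "M2 x \<in> V" "M2 (M2 x) = x" "M2 x \<noteq> x" if "x \<in> V" for x
    using fpf2 that unfolding fpf_involution_on_def by blast+
  have u: "u \<in> V" "u \<noteq> v" "M1 u = v"
    using fpf1 v unfolding u_def fpf_involution_on_def by auto
  have \<gamma>_u: "\<gamma> u = \<beta> (M2 v)" and \<gamma>_v: "\<gamma> v = (\<not> \<beta> (M2 v))"
    using u unfolding \<gamma>_def u_def by auto
  have \<gamma>_rest: "\<gamma> x = \<beta> x" if "x \<in> V - {v, u}" for x
    using that unfolding \<gamma>_def u_def by auto
  have \<beta>_short: "\<beta> (M2 v) \<noteq> \<beta> (M2 u)" if "M2 v \<noteq> u"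
  proof -
    have "M2 v \<in> V - {v, u}" using that M2[OF v] by blast
    moreover have "short_circuit M1 M2 v (M2 v) = M2 u" using M2[OF v] by (simp add: short_circuit_def u_def)
    ultimately show ?thesis using \<beta> unfolding u_def by metis
  qed
  have M2_rest: "\<gamma> (M2 x) \<noteq> \<gamma> x" if x: "x \<in> V - {v, u}" for x
  proof -
    have xV: "x \<in> V" using x by blast
    consider "M2 x = v" | "M2 x = u" | "M2 x \<in> V - {v, u}" using M2[OF xV] by blast
    then show ?thesis
    proof cases
      case 1
      then have "x = M2 v" using M2(2)[OF xV] by metis
      then show ?thesis using 1 \<gamma>_v \<gamma>_rest[OF x] by simp
    next
      case 2
      then have "x = M2 u" using M2(2)[OF xV] by metis
      then have "M2 v \<noteq> u" using x M2(2)[OF v] by auto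
      then show ?thesis using 2 \<open>x = M2 u\<close> \<beta>_short \<gamma>_u \<gamma>_rest[OF x] by simp
    next
      case 3
      then have "short_circuit M1 M2 v x = M2 x" by (auto simp: short_circuit_def u_def)
      then show ?thesis using 3 x \<beta> \<gamma>_rest unfolding u_def by metis
    qed
  qed
  have M1_rest: "\<gamma> (M1 x) \<noteq> \<gamma> x" if "x \<in> V - {v, u}" for x
    using that fpf_involution_on_Diff_pair[OF fpf1 v] \<beta> \<gamma>_rest
    unfolding u_def fpf_involution_on_def by metis
  have M2_v: "\<gamma> (M2 v) \<noteq> \<gamma> v"
  proof (cases "M2 v = u")
    case False
    then have "M2 v \<in> V - {v, u}" using M2[OF v] by blast
    then show ?thesis using \<gamma>_v \<gamma>_rest by simp
  qed (simp add: \<gamma>_u \<gamma>_v)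
  have M2_u: "\<gamma> (M2 u) \<noteq> \<gamma> u"
  proof (cases "M2 v = u")
    case True
    then have "M2 u = v" using M2(2)[OF v] by metis
    then show ?thesis by (simp add: \<gamma>_u \<gamma>_v)
  next
    case False
    then have "M2 u \<noteq> v" using M2(2)[OF u(1)] by metis
    then have "M2 u \<in> V - {v, u}" using M2[OF u(1)] by blast
    then show ?thesis using False \<beta>_short \<gamma>_u \<gamma>_rest by simp
  qed
  show ?thesis
  proof
    fix x assume "x \<in> V"
    then consider "x = v" | "x = u" | "x \<in> V - {v, u}" by blast
    then show "\<gamma> (M1 x) \<noteq> \<gamma> x \<and> \<gamma> (M2 x) \<noteq> \<gamma> x"
      by cases (use u M1_rest M2_rest M2_u M2_v \<gamma>_u \<gamma>_v in \<open>auto simp: u_def\<close>)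
  qed
qed

lemma fpf_involutions_two_colouring:
  assumes "finite V" "fpf_involution_on V M1" "fpf_involution_on V M2"
  shows "\<exists>\<beta> :: 'a \<Rightarrow> bool. \<forall>v\<in>V. \<beta> (M1 v) \<noteq> \<beta> v \<and> \<beta> (M2 v) \<noteq> \<beta> v"
  using assms
proof (induction V arbitrary: M2 rule: finite_psubset_induct)
  case (psubset V)
  show ?case
  proof (cases "V = {}")
    case False
    then obtain v where v: "v \<in> V" by blast
    have "V - {v, M1 v} \<subset> V" using v by blast
    from psubset.IH[OF this fpf_involution_on_Diff_pair[OF psubset.prems(1) v]
        fpf_involution_on_short_circuit[OF psubset.prems v]]
    obtain \<beta> :: "'a \<Rightarrow> bool"
      where "\<forall>x\<in>V - {v, M1 v}. \<beta> (M1 x) \<noteq> \<beta> x \<and> \<beta> (short_circuit M1 M2 v x) \<noteq> \<beta> x"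
      by blast
    from two_colouring_extend[OF psubset.prems v this] show ?thesis by blast
  qed simp
qed

lemma eq_if_rtrancl_edges:
  assumes "\<forall>(a, b)\<in>E. y a = y b" "(v, w) \<in> (E \<union> E\<inverse>)\<^sup>*"
  shows "y v = y w"
  using assms(2) by induction (use assms(1) in auto)

lemma card_PiE_class_constant:
  assumes R: "equiv UNIV R" and "finite V"
  shows "card {y \<in> PiE V (\<lambda>_. A). \<forall>v\<in>V. \<forall>w\<in>V. (v, w) \<in> R \<longrightarrow> y v = y w}
       = card A ^ card (V // R)"
proof -
  let ?Y = "{y \<in> PiE V (\<lambda>_. A). \<forall>v\<in>V. \<forall>w\<in>V. (v, w) \<in> R \<longrightarrow> y v = y w}"
  define \<phi> where "\<phi> g = (\<lambda>v\<in>V. g (R``{v}))" for g :: "'a set \<Rightarrow> 'b"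
  have class_eq: "R``{v} = R``{w} \<longleftrightarrow> (v, w) \<in> R" for v w
    using eq_equiv_class_iff[OF R] by blast
  have inj: "inj_on \<phi> (PiE (V // R) (\<lambda>_. A))"
  proof (rule inj_onI, rule ext)
    fix g h C
    assume g: "g \<in> PiE (V // R) (\<lambda>_. A)" and h: "h \<in> PiE (V // R) (\<lambda>_. A)" and gh: "\<phi> g = \<phi> h"
    have gh: "g (R``{v}) = h (R``{v})" if "v \<in> V" for v
      using fun_cong[OF gh, of v] that unfolding \<phi>_def by simp
    show "g C = h C"
    proof (cases "C \<in> V // R")
      case True
      then obtain v where "v \<in> V" "C = R``{v}" by (rule quotientE)
      then show ?thesis using gh by simp
    next
      case False
      then show ?thesis using PiE_arb[OF g False] PiE_arb[OF h False] by simp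
    qed
  qed
  have image: "\<phi> ` PiE (V // R) (\<lambda>_. A) = ?Y"
  proof
    show "\<phi> ` PiE (V // R) (\<lambda>_. A) \<subseteq> ?Y"
    proof (rule image_subsetI)
      fix g assume g: "g \<in> PiE (V // R) (\<lambda>_. A)"
      have "\<phi> g \<in> PiE V (\<lambda>_. A)" using g unfolding \<phi>_def by (auto intro: quotientI)
      moreover have "\<phi> g v = \<phi> g w" if "v \<in> V" "w \<in> V" "(v, w) \<in> R" for v w
        using that class_eq[of v w] unfolding \<phi>_def by simp
      ultimately show "\<phi> g \<in> ?Y" by blast
    qed
  next
    show "?Y \<subseteq> \<phi> ` PiE (V // R) (\<lambda>_. A)"
    proof
      fix y assume y: "y \<in> ?Y"
      define g where "g = (\<lambda>C\<in>V // R. y (SOME w. w \<in> C \<inter> V))"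
      have rep: "(SOME w. w \<in> R``{v} \<inter> V) \<in> R``{v} \<inter> V" if "v \<in> V" for v
        using that equiv_class_self[OF R] by (intro someI) blast
      have g_class: "g (R``{v}) = y v" if "v \<in> V" for v
        using y rep[OF that] that unfolding g_def by (auto intro: quotientI)
      have "g \<in> PiE (V // R) (\<lambda>_. A)"
      proof (rule PiE_I)
        fix C assume "C \<in> V // R"
        then obtain v where "v \<in> V" "C = R``{v}" by (rule quotientE)
        then show "g C \<in> A" using g_class y by auto
      qed (simp add: g_def)
      moreover have "\<phi> g = y"
      proof
        fix v
        show "\<phi> g v = y v"
          using g_class PiE_arb[of y V "\<lambda>_. A" v] y unfolding \<phi>_def by auto
      qed
      ultimately show "y \<in> \<phi> ` PiE (V // R) (\<lambda>_. A)" by blast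
    qed
  qed
  have "card ?Y = card (PiE (V // R) (\<lambda>_. A))"
    unfolding image[symmetric] by (rule card_image[OF inj])
  also have "\<dots> = card A ^ card (V // R)"
    using assms(2) by (simp add: card_PiE quotient_def)
  finally show ?thesis .
qed

lemma card_edge_constant_PiE:
  assumes "finite V" "E \<subseteq> V \<times> V"
  shows "card {y \<in> PiE V (\<lambda>_. A). \<forall>(a, b)\<in>E. y a = y b} = card A ^ card (V // (E \<union> E\<inverse>)\<^sup>*)"
proof -
  let ?R = "(E \<union> E\<inverse>)\<^sup>*"
  have R: "equiv UNIV ?R"
    by (intro equivI refl_rtrancl sym_rtrancl trans_rtrancl) (auto simp: sym_def)
  have edges_iff_R: "{y \<in> PiE V (\<lambda>_. A). \<forall>(a, b)\<in>E. y a = y b}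
      = {y \<in> PiE V (\<lambda>_. A). \<forall>v\<in>V. \<forall>w\<in>V. (v, w) \<in> ?R \<longrightarrow> y v = y w}"
    using assms(2) eq_if_rtrancl_edges[of E] by blast
  show ?thesis
    unfolding edges_iff_R by (rule card_PiE_class_constant[OF R assms(1)])
qed

definition twist :: "bool \<Rightarrow> ('b \<Rightarrow> 'b) \<Rightarrow> 'b \<Rightarrow> 'b" where
  "twist p f = (if p then f else id)"

lemma twist_twist: "f (f x) = x \<Longrightarrow> twist p f (twist q f x) = twist (p \<noteq> q) f x"
  by (simp add: twist_def)

lemma twist_False [simp]: "twist False f x = x"
  by (simp add: twist_def)

lemma twist_eq_iff:
  assumes "f (f y) = y" "f (f z) = z"
  shows "twist p f y = z \<longleftrightarrow> y = twist p f z"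
proof
  assume "twist p f y = z"
  then show "y = twist p f z" using twist_twist[of f y p p] assms(1) by simp
next
  assume "y = twist p f z"
  then show "twist p f y = z" using twist_twist[of f z p p] assms(2) by simp
qed

lemma card_twisted_PiE_eq:
  fixes \<tau> :: "'a \<Rightarrow> bool"
  assumes f: "\<forall>x\<in>A. f x \<in> A \<and> f (f x) = x"
    and E: "E \<subseteq> V \<times> V" and gauge: "\<forall>(a, b)\<in>E. (\<tau> a \<noteq> \<tau> b) = tw a b"
  shows "card {x \<in> PiE V (\<lambda>_. A). \<forall>(a, b)\<in>E. x a = twist (tw a b) f (x b)}
       = card {y \<in> PiE V (\<lambda>_. A). \<forall>(a, b)\<in>E. y a = y b}"
proof -
  let ?X = "{x \<in> PiE V (\<lambda>_. A). \<forall>(a, b)\<in>E. x a = twist (tw a b) f (x b)}"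
  let ?Y = "{y \<in> PiE V (\<lambda>_. A). \<forall>(a, b)\<in>E. y a = y b}"
  define \<phi> where "\<phi> x = (\<lambda>v\<in>V. twist (\<tau> v) f (x v))" for x
  have twist_A: "twist p f y \<in> A" if "y \<in> A" for p y
    using f that by (simp add: twist_def)
  have \<phi>_PiE: "\<phi> x \<in> PiE V (\<lambda>_. A)" if "x \<in> PiE V (\<lambda>_. A)" for x
    unfolding \<phi>_def using that by (intro PiE_I) (auto intro: twist_A)
  have \<phi>_\<phi>: "\<phi> (\<phi> x) = x" if x: "x \<in> PiE V (\<lambda>_. A)" for x
  proof
    fix v
    show "\<phi> (\<phi> x) v = x v"
    proof (cases "v \<in> V")
      case True
      then have "f (f (x v)) = x v" using f PiE_mem[OF x True] by blast
      then show ?thesis using True unfolding \<phi>_def by (simp add: twist_twist)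
    next
      case False
      then show ?thesis using PiE_arb[OF x False] unfolding \<phi>_def by simp
    qed
  qed
  have edge: "\<phi> x a = \<phi> x b \<longleftrightarrow> x a = twist (tw a b) f (x b)"
    if x: "x \<in> PiE V (\<lambda>_. A)" and ab: "(a, b) \<in> E" for x a b
  proof -
    have V: "a \<in> V" "b \<in> V" using ab E by auto
    then have A: "x a \<in> A" "twist (\<tau> b) f (x b) \<in> A" using x twist_A by auto
    have "\<phi> x a = \<phi> x b \<longleftrightarrow> twist (\<tau> a) f (x a) = twist (\<tau> b) f (x b)"
      using V by (simp add: \<phi>_def)
    also have "\<dots> \<longleftrightarrow> x a = twist (\<tau> a) f (twist (\<tau> b) f (x b))"
      using A f by (intro twist_eq_iff) auto
    also have "\<dots> \<longleftrightarrow> x a = twist (tw a b) f (x b)"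
    proof -
      have "f (f (x b)) = x b" using V x f by auto
      moreover have "(\<tau> a \<noteq> \<tau> b) = tw a b" using gauge ab by auto
      ultimately show ?thesis by (simp add: twist_twist)
    qed
    finally show ?thesis .
  qed
  have "bij_betw \<phi> ?X ?Y"
  proof (rule bij_betw_byWitness[where f' = \<phi>])
    show "\<forall>x\<in>?X. \<phi> (\<phi> x) = x" "\<forall>y\<in>?Y. \<phi> (\<phi> y) = y"
      using \<phi>_\<phi> by blast+
    show "\<phi> ` ?X \<subseteq> ?Y"
    proof (rule image_subsetI)
      fix x assume "x \<in> ?X"
      then have x: "x \<in> PiE V (\<lambda>_. A)" and "\<forall>(a, b)\<in>E. x a = twist (tw a b) f (x b)"
        by blast+
      then have "\<forall>(a, b)\<in>E. \<phi> x a = \<phi> x b" using edge[OF x] by blast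
      then show "\<phi> x \<in> ?Y" using \<phi>_PiE[OF x] by blast
    qed
    show "\<phi> ` ?Y \<subseteq> ?X"
    proof (rule image_subsetI)
      fix y assume "y \<in> ?Y"
      then have y: "y \<in> PiE V (\<lambda>_. A)" and "\<forall>(a, b)\<in>E. \<phi> (\<phi> y) a = \<phi> (\<phi> y) b"
        using \<phi>_\<phi> by auto
      then have "\<forall>(a, b)\<in>E. \<phi> y a = twist (tw a b) f (\<phi> y b)"
        using edge[OF \<phi>_PiE[OF y]] by blast
      then show "\<phi> y \<in> ?X" using \<phi>_PiE[OF y] by blast
    qed
  qed
  then show ?thesis by (rule bij_betw_same_card)
qed

definition prv :: "nat \<Rightarrow> nat \<Rightarrow> nat" where
  "prv m l = (if l = 1 then m else l - 1)"

definition loop_mate :: "nat \<Rightarrow> nat \<times> bool \<Rightarrow> nat \<times> bool" where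
  "loop_mate m v = (if snd v then (nxt m (fst v), False) else (prv m (fst v), True))"

definition arrow_mate :: "(nat \<Rightarrow> nat) \<Rightarrow> (nat \<Rightarrow> int) \<Rightarrow> nat \<times> bool \<Rightarrow> nat \<times> bool" where
  "arrow_mate \<alpha> s v =
     (if v = tail_pt s (fst v) then head_pt s (\<alpha> (fst v)) else tail_pt s (inv \<alpha> (fst v)))"

lemma head_pt_eq: "head_pt s l = (l, s l \<noteq> 1)"
  by (simp add: head_pt_def)

lemma tail_pt_eq: "tail_pt s l = (l, s l = 1)"
  by (simp add: tail_pt_def)

lemma nxt_in: "l \<in> {1..m} \<Longrightarrow> nxt m l \<in> {1..m}"
  by (auto simp: nxt_def)

lemma fpf_involution_on_loop_mate: "1 \<le> m \<Longrightarrow> fpf_involution_on (gverts m) (loop_mate m)"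
  by (auto simp: fpf_involution_on_def gverts_def loop_mate_def nxt_def prv_def)

lemma fpf_involution_on_arrow_mate:
  assumes "\<alpha> permutes {1..m}"
  shows "fpf_involution_on (gverts m) (arrow_mate \<alpha> s)"
  using permutes_in_image[OF assms] permutes_in_image[OF permutes_inv[OF assms]] permutes_inverses[OF assms]
  by (auto simp: fpf_involution_on_def gverts_def arrow_mate_def head_pt_def tail_pt_def)

lemma gedges_eq:
  assumes "1 \<le> m"
  shows "gedges m \<alpha> s = {((l, True), (nxt m l, False)) | l. l \<in> {1..m}}
                        \<union> {(tail_pt s l, head_pt s (\<alpha> l)) | l. l \<in> {1..m}}"
  using assms unfolding gedges_def nxt_def by (auto 4 3)

lemma gedges_mates:
  assumes "1 \<le> m" "(a, b) \<in> gedges m \<alpha> s"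
  shows "a \<in> gverts m \<and> (b = loop_mate m a \<or> b = arrow_mate \<alpha> s a)"
  using assms by (auto simp: gedges_eq gverts_def loop_mate_def arrow_mate_def tail_pt_eq)

lemma gedges_subset_gverts:
  assumes "1 \<le> m" "\<alpha> permutes {1..m}"
  shows "gedges m \<alpha> s \<subseteq> gverts m \<times> gverts m"
proof -
  have "a \<in> gverts m \<and> b \<in> gverts m" if "(a, b) \<in> gedges m \<alpha> s" for a b
    using gedges_mates[OF assms(1) that] fpf_involution_on_loop_mate[OF assms(1)]
      fpf_involution_on_arrow_mate[OF assms(2)]
    unfolding fpf_involution_on_def by auto
  then show ?thesis by auto
qed

lemma gedges_two_colouring:
  assumes "1 \<le> m" "\<alpha> permutes {1..m}"
  obtains \<beta> :: "nat \<times> bool \<Rightarrow> bool" where "\<forall>(a, b)\<in>gedges m \<alpha> s. \<beta> a \<noteq> \<beta> b"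
proof -
  have "finite (gverts m)" by (simp add: gverts_def)
  from fpf_involutions_two_colouring[OF this fpf_involution_on_loop_mate[OF assms(1)]
      fpf_involution_on_arrow_mate[OF assms(2)]]
  obtain \<beta> :: "nat \<times> bool \<Rightarrow> bool"
    where \<beta>: "\<forall>v\<in>gverts m. \<beta> (loop_mate m v) \<noteq> \<beta> v \<and> \<beta> (arrow_mate \<alpha> s v) \<noteq> \<beta> v"
    by blast
  have "\<beta> a \<noteq> \<beta> b" if "(a, b) \<in> gedges m \<alpha> s" for a b
    using gedges_mates[OF assms(1) that] \<beta> by auto
  then show thesis using that by blast
qed

definition twisted_labellings :: "nat \<Rightarrow> nat \<Rightarrow> (nat \<Rightarrow> nat) \<Rightarrow> (nat \<Rightarrow> int) \<Rightarrow> (nat \<times> bool \<Rightarrow> nat) set" where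
  "twisted_labellings N m \<alpha> s = {x \<in> PiE (gverts m) (\<lambda>_. {1..N}).
     \<forall>(a, b)\<in>gedges m \<alpha> s. x a = twist (snd a = snd b) (bar N) (x b)}"

lemma card_twisted_labellings:
  assumes "1 \<le> m" "\<alpha> permutes {1..m}"
  shows "card (twisted_labellings N m \<alpha> s) = N ^ f_state m \<alpha> s"
proof -
  obtain \<beta> :: "nat \<times> bool \<Rightarrow> bool" where \<beta>: "\<forall>(a, b)\<in>gedges m \<alpha> s. \<beta> a \<noteq> \<beta> b"
    using gedges_two_colouring[OF assms, where s = s] by blast
  have "card (twisted_labellings N m \<alpha> s)
      = card {y \<in> PiE (gverts m) (\<lambda>_. {1..N}). \<forall>(a, b)\<in>gedges m \<alpha> s. y a = y b}"
    unfolding twisted_labellings_def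
  proof (rule card_twisted_PiE_eq[where \<tau> = "\<lambda>v. snd v \<noteq> \<beta> v"])
    show "\<forall>x\<in>{1..N}. bar N x \<in> {1..N} \<and> bar N (bar N x) = x"
      by (auto simp: bar_def)
    show "\<forall>(a, b)\<in>gedges m \<alpha> s. ((snd a \<noteq> \<beta> a) \<noteq> (snd b \<noteq> \<beta> b)) = (snd a = snd b)"
      using \<beta> by auto
  qed (rule gedges_subset_gverts[OF assms])
  also have "\<dots> = card {1..N} ^ f_state m \<alpha> s"
    unfolding f_state_def
    by (rule card_edge_constant_PiE[OF _ gedges_subset_gverts[OF assms]]) (simp add: gverts_def)
  finally show ?thesis by simp
qed

definition walk_label :: "nat \<Rightarrow> (nat \<Rightarrow> nat) \<Rightarrow> nat \<times> bool \<Rightarrow> nat" where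
  "walk_label m c v = c (if snd v then nxt m (fst v) else fst v)"

definition labelling_of_walk :: "nat \<Rightarrow> (nat \<Rightarrow> nat) \<Rightarrow> nat \<times> bool \<Rightarrow> nat" where
  "labelling_of_walk m c = restrict (walk_label m c) (gverts m)"

definition walk_of_labelling ::
    "nat \<Rightarrow> nat \<Rightarrow> (nat \<Rightarrow> int) \<Rightarrow> (nat \<times> bool \<Rightarrow> nat) \<Rightarrow> (nat \<Rightarrow> nat) \<times> (nat \<Rightarrow> nat)" where
  "walk_of_labelling N m s x =
     (\<lambda>l\<in>{1..m}. twist (s l \<noteq> 1) (bar N) (x (head_pt s l)), \<lambda>l\<in>{1..m}. x (l, False))"

lemma leg_ends_iff_walk_label:
  "(c l, c (nxt m l)) = leg_ends N (s l) i j \<longleftrightarrow>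
     walk_label m c (head_pt s l) = twist (s l \<noteq> 1) (bar N) i \<and>
     walk_label m c (tail_pt s l) = twist (s l \<noteq> 1) (bar N) j"
  by (auto simp: leg_ends_def walk_label_def head_pt_eq tail_pt_eq twist_def)

lemma bar_bar: "x \<in> {1..N} \<Longrightarrow> bar N (bar N x) = x"
  by (auto simp: bar_def)

lemma twist_bar_in: "x \<in> {1..N} \<Longrightarrow> twist p (bar N) x \<in> {1..N}"
  by (auto simp: twist_def bar_def)

lemma twist_arrow:
  "y \<in> {1..N} \<Longrightarrow> twist (snd (tail_pt s l) = snd (head_pt s k)) (bar N) (twist (s k \<noteq> 1) (bar N) y)
     = twist (s l \<noteq> 1) (bar N) y"
  by (auto simp: twist_def head_pt_eq tail_pt_eq bar_bar)

lemma head_tail_pt_in_gverts: "l \<in> {1..m} \<Longrightarrow> head_pt s l \<in> gverts m \<and> tail_pt s l \<in> gverts m"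
  by (simp add: gverts_def head_pt_eq tail_pt_eq)

lemma walk_label_in_state_walks:
  assumes "(i, c) \<in> state_walks N m \<alpha> s" "l \<in> {1..m}"
  shows "walk_label m c (head_pt s l) = twist (s l \<noteq> 1) (bar N) (i l)"
    and "walk_label m c (tail_pt s l) = twist (s l \<noteq> 1) (bar N) (i (\<alpha> l))"
  using assms by (simp_all add: state_walks_def leg_ends_iff_walk_label)

lemma walk_label_walk_of_labelling:
  assumes "1 \<le> m" "x \<in> twisted_labellings N m \<alpha> s" "v \<in> gverts m"
  shows "walk_label m (snd (walk_of_labelling N m s x)) v = x v"
proof -
  obtain l b where v: "v = (l, b)" "l \<in> {1..m}" using assms(3) by (auto simp: gverts_def)
  have "((l, True), (nxt m l, False)) \<in> gedges m \<alpha> s"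
    using v(2) by (auto simp: gedges_eq[OF assms(1)])
  then have "x (l, True) = x (nxt m l, False)"
    using assms(2) by (auto simp: twisted_labellings_def)
  then show ?thesis
    using v nxt_in by (cases b) (auto simp: walk_label_def walk_of_labelling_def)
qed

lemma walk_of_labelling_of_walk:
  assumes "(i, c) \<in> state_walks N m \<alpha> s"
  shows "walk_of_labelling N m s (labelling_of_walk m c) = (i, c)"
proof -
  have i: "i \<in> PiE {1..m} (\<lambda>_. {1..N})" and c: "c \<in> PiE {1..m} (\<lambda>_. {1..N})"
    using assms by (auto simp: state_walks_def)
  have "(\<lambda>l\<in>{1..m}. twist (s l \<noteq> 1) (bar N) (labelling_of_walk m c (head_pt s l))) = i"
  proof
    fix l
    show "(\<lambda>l\<in>{1..m}. twist (s l \<noteq> 1) (bar N) (labelling_of_walk m c (head_pt s l))) l = i l"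
    proof (cases "l \<in> {1..m}")
      case True
      then show ?thesis
        using walk_label_in_state_walks(1)[OF assms True] head_tail_pt_in_gverts[OF True] PiE_mem[OF i True]
        by (simp add: labelling_of_walk_def twist_twist bar_bar)
    next
      case False
      then show ?thesis using PiE_arb[OF i False] by auto
    qed
  qed
  moreover have "(\<lambda>l\<in>{1..m}. labelling_of_walk m c (l, False)) = c"
  proof
    fix l
    show "(\<lambda>l\<in>{1..m}. labelling_of_walk m c (l, False)) l = c l"
    proof (cases "l \<in> {1..m}")
      case False
      then show ?thesis using PiE_arb[OF c False] by auto
    qed (simp add: labelling_of_walk_def walk_label_def gverts_def)
  qed
  ultimately show ?thesis by (simp add: walk_of_labelling_def)
qed

lemma labelling_of_walk_of_labelling:
  assumes "1 \<le> m" "x \<in> twisted_labellings N m \<alpha> s"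
  shows "labelling_of_walk m (snd (walk_of_labelling N m s x)) = x"
proof
  fix v
  have x: "x \<in> PiE (gverts m) (\<lambda>_. {1..N})" using assms(2) by (simp add: twisted_labellings_def)
  show "labelling_of_walk m (snd (walk_of_labelling N m s x)) v = x v"
  proof (cases "v \<in> gverts m")
    case True
    then show ?thesis using walk_label_walk_of_labelling[OF assms] by (simp add: labelling_of_walk_def)
  next
    case False
    then show ?thesis using PiE_arb[OF x False] by (simp add: labelling_of_walk_def)
  qed
qed

lemma labelling_of_walk_in_twisted_labellings:
  assumes m: "1 \<le> m" and \<alpha>: "\<alpha> permutes {1..m}" and ic: "(i, c) \<in> state_walks N m \<alpha> s"
  shows "labelling_of_walk m c \<in> twisted_labellings N m \<alpha> s"
proof -
  have i: "i \<in> PiE {1..m} (\<lambda>_. {1..N})" and c: "c \<in> PiE {1..m} (\<lambda>_. {1..N})"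
    using ic by (auto simp: state_walks_def)
  have "labelling_of_walk m c \<in> PiE (gverts m) (\<lambda>_. {1..N})"
  proof (rule PiE_I)
    fix v assume "v \<in> gverts m"
    then obtain l b where "v = (l, b)" "l \<in> {1..m}" by (auto simp: gverts_def)
    then show "labelling_of_walk m c v \<in> {1..N}"
      using PiE_mem[OF c] nxt_in by (auto simp: labelling_of_walk_def walk_label_def gverts_def)
  qed (simp add: labelling_of_walk_def)
  moreover have "labelling_of_walk m c a = twist (snd a = snd b) (bar N) (labelling_of_walk m c b)"
    if "(a, b) \<in> gedges m \<alpha> s" for a b
    using that unfolding gedges_eq[OF m]
  proof (elim UnE CollectE exE conjE)
    fix l assume "(a, b) = ((l, True), (nxt m l, False))" "l \<in> {1..m}"
    then show ?thesis
      using nxt_in by (auto simp: labelling_of_walk_def walk_label_def gverts_def)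
  next
    fix l assume ab: "(a, b) = (tail_pt s l, head_pt s (\<alpha> l))" and l: "l \<in> {1..m}"
    have \<alpha>l: "\<alpha> l \<in> {1..m}" using l permutes_in_image[OF \<alpha>] by blast
    show ?thesis
      using ab walk_label_in_state_walks(2)[OF ic l] walk_label_in_state_walks(1)[OF ic \<alpha>l]
        head_tail_pt_in_gverts[OF l] head_tail_pt_in_gverts[OF \<alpha>l] twist_arrow PiE_mem[OF i \<alpha>l]
      by (simp add: labelling_of_walk_def)
  qed
  ultimately show ?thesis unfolding twisted_labellings_def by blast
qed

lemma walk_of_labelling_in_state_walks:
  assumes m: "1 \<le> m" and \<alpha>: "\<alpha> permutes {1..m}" and x: "x \<in> twisted_labellings N m \<alpha> s"
  shows "walk_of_labelling N m s x \<in> state_walks N m \<alpha> s"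
proof -
  let ?t = "\<lambda>l. twist (s l \<noteq> 1) (bar N)"
  obtain i c where ic: "walk_of_labelling N m s x = (i, c)" by force
  have x_in: "x v \<in> {1..N}" if "v \<in> gverts m" for v
    using x that by (auto simp: twisted_labellings_def)
  have i: "i \<in> PiE {1..m} (\<lambda>_. {1..N})" and c: "c \<in> PiE {1..m} (\<lambda>_. {1..N})"
    using ic x_in twist_bar_in by (auto simp: walk_of_labelling_def gverts_def head_pt_eq)
  have "(c l, c (nxt m l)) = leg_ends N (s l) (i l) (i (\<alpha> l))" if l: "l \<in> {1..m}" for l
  proof -
    have \<alpha>l: "\<alpha> l \<in> {1..m}" using l permutes_in_image[OF \<alpha>] by blast
    have heads: "x (head_pt s l) \<in> {1..N}" "x (head_pt s (\<alpha> l)) \<in> {1..N}"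
      using x_in head_tail_pt_in_gverts l \<alpha>l by blast+
    have label: "walk_label m c v = x v" if "v \<in> gverts m" for v
      using walk_label_walk_of_labelling[OF m x that] by (simp add: ic)
    have "walk_label m c (head_pt s l) = ?t l (i l)"
      using label head_tail_pt_in_gverts[OF l] heads ic l
      by (auto simp: walk_of_labelling_def twist_twist bar_bar)
    moreover have "walk_label m c (tail_pt s l) = ?t l (i (\<alpha> l))"
    proof -
      let ?y = "?t (\<alpha> l) (x (head_pt s (\<alpha> l)))"
      have "(tail_pt s l, head_pt s (\<alpha> l)) \<in> gedges m \<alpha> s"
        using l by (auto simp: gedges_eq[OF m])
      then have "x (tail_pt s l) = twist (snd (tail_pt s l) = snd (head_pt s (\<alpha> l))) (bar N) (?t (\<alpha> l) ?y)"
        using x heads by (auto simp: twisted_labellings_def twist_twist bar_bar)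
      also have "\<dots> = ?t l ?y"
        using twist_arrow twist_bar_in heads by blast
      finally show ?thesis
        using label head_tail_pt_in_gverts[OF l] ic \<alpha>l by (auto simp: walk_of_labelling_def)
    qed
    ultimately show ?thesis by (simp add: leg_ends_iff_walk_label)
  qed
  then show ?thesis using i c ic by (simp add: state_walks_def)
qed

lemma card_state_walks:
  assumes "1 \<le> m" "\<alpha> permutes {1..m}"
  shows "card (state_walks N m \<alpha> s) = card (twisted_labellings N m \<alpha> s)"
proof (rule bij_betw_same_card[of "\<lambda>(i, c). labelling_of_walk m c"],
       rule bij_betw_byWitness[where f' = "walk_of_labelling N m s"])
  show "\<forall>p\<in>state_walks N m \<alpha> s. walk_of_labelling N m s (case p of (i, c) \<Rightarrow> labelling_of_walk m c) = p"
    using walk_of_labelling_of_walk by fast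
  show "\<forall>x\<in>twisted_labellings N m \<alpha> s. (case walk_of_labelling N m s x of (i, c) \<Rightarrow> labelling_of_walk m c) = x"
    using labelling_of_walk_of_labelling[OF assms(1)] by (simp add: case_prod_beta)
  show "(\<lambda>(i, c). labelling_of_walk m c) ` state_walks N m \<alpha> s \<subseteq> twisted_labellings N m \<alpha> s"
    using labelling_of_walk_in_twisted_labellings[OF assms] by fast
  show "walk_of_labelling N m s ` twisted_labellings N m \<alpha> s \<subseteq> state_walks N m \<alpha> s"
    using walk_of_labelling_in_state_walks[OF assms] by blast
qed

theorem theorem12:
  fixes N m :: nat and \<alpha> :: "nat \<Rightarrow> nat"
  assumes "N \<ge> 1" and "m \<ge> 1" and "\<alpha> permutes {1..m}"
  shows "wSt_so N m \<alpha> =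
    (\<Sum>s \<in> states m. of_int (state_sign m s) * (real N) powi (int (f_state m \<alpha> s) - 1))"
proof -
  have "wSt_so N m \<alpha> = (\<Sum>s\<in>states m. of_int (state_sign m s) * (real N ^ f_state m \<alpha> s / real N))"
    using assms(2,3) by (simp add: wSt_so_def mtrace_rho_w_so card_state_walks card_twisted_labellings
        sum_distrib_left)
  also have "\<dots> = (\<Sum>s\<in>states m. of_int (state_sign m s) * (real N) powi (int (f_state m \<alpha> s) - 1))"
    using assms(1) by (simp add: power_int_diff)
  finally show ?thesis .
qed

end
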